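(* Consider the discrete-time linear system $x(k+1)=Ax(k)+Bu(k)$ with the polytopic constraint sets $\mathcal{X}$, $\mathcal{U}$, the gain $K$, the terminal set $\mathcal{X}_f$, the matrices $M$, $P$ and the barrier functions $B_x$, $B_u$, $B_f$ described in the context, and suppose conditions (A1)–(A5) of the context hold. Let the feasible set $\mathcal{X}_N$ (defined in the context) have nonempty interior. For $x\in\mathcal{X}_N^\circ$ let $\tilde{\mathbf u}^*(x)=(\tilde u_0^*(x),\dots,\tilde u_{N-1}^*(x))$ be the minimizer of the barrier function based problem $$\tilde J_N^*(x)=\min_{\mathbf u}\ \sum_{k=0}^{N-1}\big[\ell(x_k,u_k)+\varepsilon B_u(u_k)+\varepsilon B_x(x_k)\big]+x_N^\top P x_N+\varepsilon B_f(x_N)$$ subject to $x_0=x$, $x_{k+1}=Ax_k+Bu_k$ (each barrier term being $+\infty$ outside the interior of its domain). Then the feedback $u(k)=\tilde u_0^*(x(k))$ asymptotically stabilizes the origin of the system under strict satisfaction of all input and state constraints for every initial condition $x(0)\in\mathcal{X}_N^\circ$; i.e., for every $x(0)\in\mathcal{X}_N^\circ$ the closed-loop states and inputs remain strictly inside $\mathcal{X}$ and $\mathcal{U}$ for all $k\ge0$, and the origin is asymptotically stable for the closed loop with $\mathcal{X}_N^\circ$ contained in its region of attraction.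
   Context: System: $x(k+1)=Ax(k)+Bu(k)$, $A\in\mathbb{R}^{n\times n}$, $B\in\mathbb{R}^{n\times m}$, $(A,B)$ stabilizable. Constraint sets are (compact) polytopes $\mathcal{X}=\{x: C_xx\le d_x\}$, $\mathcal{U}=\{u: C_uu\le d_u\}$ with $C_x\in\mathbb{R}^{q_x\times n}$, $C_u\in\mathbb{R}^{q_u\times m}$, and $d_x\in\mathbb{R}^{q_x}$, $d_u\in\mathbb{R}^{q_u}$ having strictly positive entries; $C^i$ denotes the $i$-th row and $d^i$ the $i$-th entry; $S^\circ$, $\partial S$ denote interior and boundary. Stage cost $\ell(x,u)=x^\top Qx+u^\top Ru$ with $Q$ symmetric positive semidefinite, $R$ symmetric positive definite; horizon $N\in\mathbb{N}_{\ge1}$; barrier weight $\varepsilon>0$; predicted states $x_0=x$, $x_{k+1}=Ax_k+Bu_k$. Recentered logarithmic barriers: for a polytope $\{z: Cz\le d\}$ with $d>0$ entrywise, let $\bar B_i(z)=-\ln(-C^iz+d^i)$ and $\bar B=\sum_i\bar B_i$. The gradient recentered barrier is $\bar B(z)-\bar B(0)-\nabla\bar B(0)^\top z$; the weight recentered barrier is $\sum_i(1+w^i)(\bar B_i(z)-\bar B_i(0))$ with a vector $w\ge0$ chosen such that $\sum_i(1+w^i)\nabla\bar B_i(0)=0$. Conditions: $K\in\mathbb{R}^{m\times n}$ is a stabilizing gain ($A_K:=A+BK$ Schur); $\mathcal{X}_K:=\{x\in\mathcal{X}: Kx\in\mathcal{U}\}$ and $B_K(x):=B_x(x)+B_u(Kx)$.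 (A1) $B_x$ and $B_u$ are recentered (gradient or weight recentered) logarithmic barrier functions for $\mathcal{X}$ and $\mathcal{U}$. (A2) There is a symmetric positive semidefinite $M$ with $B_K(x)\le x^\top Mx$ for all $x\in\mathcal{N}$, where $\mathcal{N}\subset\mathcal{X}_K$ is convex and compact with $0\in\mathcal{N}^\circ$. (A3) $P$ is symmetric positive definite and solves $P=A_K^\top PA_K+K^\top RK+Q+\varepsilon M$. (A4) The terminal set $\mathcal{X}_f$ is convex and compact with $0\in\mathcal{X}_f$, $\mathcal{X}_f\subset\mathcal{N}\subset\mathcal{X}_K$, and $A_Kx\in\mathcal{X}_f$ for all $x\in\mathcal{X}_f$. (A5) $B_f:\mathcal{X}_f^\circ\to\mathbb{R}_{\ge0}$ is a recentered barrier function for $\mathcal{X}_f$ (convex, continuously differentiable, $B_f(0)=0$, $B_f(x)\to\infty$ as $x\to\partial\mathcal{X}_f$) and $B_f(A_Kx)-B_f(x)\le0$ for all $x\in\mathcal{X}_f^\circ$. Feasible set: $\mathcal{X}_N=\{x\in\mathcal{X}:\exists\,\mathbf u=(u_0,\dots,u_{N-1})$ with $u_k\in\mathcal{U}$, $x_k\in\mathcal{X}$ for $k=0,\dots,N-1$ and $x_N\in\mathcal{X}_f\}$, where $x_k$ are the predicted states from $x_0=x$. *)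

theory Defs
  imports "HOL-Analysis.Analysis"
begin

definition symmetric_mat :: "real^'n^'n \<Rightarrow> bool" where
  "symmetric_mat M \<longleftrightarrow> transpose M = M"

definition psd_mat :: "real^'n^'n \<Rightarrow> bool" where
  "psd_mat M \<longleftrightarrow> symmetric_mat M \<and> (\<forall>x. 0 \<le> x \<bullet> (M *v x))"

definition pd_mat :: "real^'n^'n \<Rightarrow> bool" where
  "pd_mat M \<longleftrightarrow> symmetric_mat M \<and> (\<forall>x. x \<noteq> 0 \<longrightarrow> 0 < x \<bullet> (M *v x))"

definition schur_stable :: "real^'n^'n \<Rightarrow> bool" where
  "schur_stable A \<longleftrightarrow>
     (\<forall>(lam::complex) (v::complex^'n). v \<noteq> 0 \<and> map_matrix complex_of_real A *v v = lam *s v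
        \<longrightarrow> cmod lam < 1)"

definition stabilizable :: "real^'n^'n \<Rightarrow> real^'m^'n \<Rightarrow> bool" where
  "stabilizable A B \<longleftrightarrow> (\<exists>K::real^'n^'m. schur_stable (A + B ** K))"

definition polytope_set :: "real^'n^'q \<Rightarrow> real^'q \<Rightarrow> (real^'n) set" where
  "polytope_set C d = {z. \<forall>i. (C *v z) $ i \<le> d $ i}"

definition grad :: "(real^'n \<Rightarrow> real) \<Rightarrow> real^'n \<Rightarrow> real^'n" where
  "grad f x = (THE D. GDERIV f x :> D)"

definition lbar_i :: "real^'n^'q \<Rightarrow> real^'q \<Rightarrow> 'q \<Rightarrow> real^'n \<Rightarrow> real" where
  "lbar_i C d i z = - ln (- (C *v z) $ i + d $ i)"

definition lbar :: "real^'n^'q::finite \<Rightarrow> real^'q \<Rightarrow> real^'n \<Rightarrow> real" where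
  "lbar C d z = (\<Sum>i\<in>UNIV. lbar_i C d i z)"

definition grad_recentered :: "real^'n^'q::finite \<Rightarrow> real^'q \<Rightarrow> real^'n \<Rightarrow> real" where
  "grad_recentered C d z = lbar C d z - lbar C d 0 - grad (lbar C d) 0 \<bullet> z"

definition weight_recentered ::
    "real^'n^'q::finite \<Rightarrow> real^'q \<Rightarrow> real^'q \<Rightarrow> real^'n \<Rightarrow> real" where
  "weight_recentered C d w z = (\<Sum>i\<in>UNIV. (1 + w $ i) * (lbar_i C d i z - lbar_i C d i 0))"

definition admissible_weight :: "real^'n^'q::finite \<Rightarrow> real^'q \<Rightarrow> real^'q \<Rightarrow> bool" where
  "admissible_weight C d w \<longleftrightarrow>
     (\<forall>i. 0 \<le> w $ i) \<and> (\<Sum>i\<in>UNIV. (1 + w $ i) *\<^sub>R grad (lbar_i C d i) 0) = 0"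

text \<open>Only the values on the interior matter (outside, the barrier is \<open>+\<infinity>\<close>, which is
  handled by requiring strict feasibility explicitly).\<close>
definition recentered_log_barrier ::
    "real^'n^'q::finite \<Rightarrow> real^'q \<Rightarrow> (real^'n \<Rightarrow> real) \<Rightarrow> bool" where
  "recentered_log_barrier C d B \<longleftrightarrow>
     (\<forall>z\<in>interior (polytope_set C d). B z = grad_recentered C d z) \<or>
     (\<exists>w. admissible_weight C d w \<and>
          (\<forall>z\<in>interior (polytope_set C d). B z = weight_recentered C d w z))"

definition recentered_barrier :: "(real^'n) set \<Rightarrow> (real^'n \<Rightarrow> real) \<Rightarrow> bool" where
  "recentered_barrier S Bf \<longleftrightarrow>
     0 \<in> interior S \<and>
     convex_on (interior S) Bf \<and>
     (\<forall>x\<in>interior S. \<exists>D. GDERIV Bf x :> D) \<and>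
     continuous_on (interior S) (grad Bf) \<and>
     (\<forall>x\<in>interior S. 0 \<le> Bf x) \<and>
     Bf 0 = 0 \<and>
     (\<forall>y\<in>frontier S. filterlim Bf at_top (at y within interior S))"

primrec pred_state ::
    "real^'n^'n \<Rightarrow> real^'m^'n \<Rightarrow> real^'n \<Rightarrow> (nat \<Rightarrow> real^'m) \<Rightarrow> nat \<Rightarrow> real^'n" where
  "pred_state A B x u 0 = x"
| "pred_state A B x u (Suc k) = A *v pred_state A B x u k + B *v u k"

definition feasible_set ::
    "real^'n^'n \<Rightarrow> real^'m^'n \<Rightarrow> (real^'n) set \<Rightarrow> (real^'m) set \<Rightarrow> (real^'n) set
     \<Rightarrow> nat \<Rightarrow> (real^'n) set" where
  "feasible_set A B X U Xf N =
     {x \<in> X. \<exists>u. (\<forall>k<N. u k \<in> U \<and> pred_state A B x u k \<in> X) \<and> pred_state A B x u N \<in> Xf}"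

text \<open>Input sequences for which every barrier term is finite.\<close>
definition strictly_feasible ::
    "real^'n^'n \<Rightarrow> real^'m^'n \<Rightarrow> (real^'n) set \<Rightarrow> (real^'m) set \<Rightarrow> (real^'n) set
     \<Rightarrow> nat \<Rightarrow> real^'n \<Rightarrow> (nat \<Rightarrow> real^'m) \<Rightarrow> bool" where
  "strictly_feasible A B X U Xf N x u \<longleftrightarrow>
     (\<forall>k<N. u k \<in> interior U \<and> pred_state A B x u k \<in> interior X) \<and>
     pred_state A B x u N \<in> interior Xf"

definition barrier_cost ::
    "real^'n^'n \<Rightarrow> real^'m^'n \<Rightarrow> real^'n^'n \<Rightarrow> real^'m^'m \<Rightarrow> real^'n^'n \<Rightarrow> real
     \<Rightarrow> (real^'n \<Rightarrow> real) \<Rightarrow> (real^'m \<Rightarrow> real) \<Rightarrow> (real^'n \<Rightarrow> real)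
     \<Rightarrow> nat \<Rightarrow> real^'n \<Rightarrow> (nat \<Rightarrow> real^'m) \<Rightarrow> real" where
  "barrier_cost A B Q R P eps Bx Bu Bf N x u =
     (\<Sum>k<N. let xk = pred_state A B x u k in
        xk \<bullet> (Q *v xk) + u k \<bullet> (R *v u k) + eps * Bu (u k) + eps * Bx xk)
     + pred_state A B x u N \<bullet> (P *v pred_state A B x u N) + eps * Bf (pred_state A B x u N)"

text \<open>\<open>u\<close> minimizes the barrier based problem at \<open>x\<close>: the cost is \<open>+\<infinity>\<close> unless
  the input sequence is strictly feasible, so a minimizer is a strictly feasible
  sequence whose cost is no larger than that of any other strictly feasible sequence.\<close>
definition is_barrier_minimizer where
  "is_barrier_minimizer A B X U Xf Q R P eps Bx Bu Bf N x u \<longleftrightarrow>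
     strictly_feasible A B X U Xf N x u \<and>
     (\<forall>v. strictly_feasible A B X U Xf N x v \<longrightarrow>
        barrier_cost A B Q R P eps Bx Bu Bf N x u \<le> barrier_cost A B Q R P eps Bx Bu Bf N x v)"

definition asymptotically_stable_on :: "('a::real_normed_vector \<Rightarrow> 'a) \<Rightarrow> 'a set \<Rightarrow> bool" where
  "asymptotically_stable_on f D \<longleftrightarrow>
     0 \<in> D \<and> f 0 = 0 \<and>
     (\<forall>e>0. \<exists>\<delta>>0. \<forall>x\<in>D. norm x < \<delta> \<longrightarrow> (\<forall>k. norm ((f ^^ k) x) < e)) \<and>
     (\<forall>x\<in>D. (\<lambda>k. (f ^^ k) x) \<longlonglongrightarrow> 0)"

end

theory Submission
  imports Defs "HOL-Real_Asymp.Real_Asymp"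
begin

text \<open>The optimal barrier cost \<open>V(x) = J\<^sub>N\<^sup>*(x)\<close> is a Lyapunov function for the closed loop.
  Shifting an optimal input sequence and appending \<open>K x\<^sub>N\<close> gives a strictly feasible candidate at the
  successor state, and (A2), (A3), (A5) make the terminal cost \<open>x\<^sup>T P x + \<epsilon> B\<^sub>f(x)\<close> decrease along
  \<open>A\<^sub>K\<close> by at least the stage cost, so \<open>V\<close> decreases by at least \<open>\<epsilon> B\<^sub>x(x)\<close>. A recentered
  logarithmic barrier of a compact polytope is a sum, with weights at least one, of
  \<open>-ln(1 - t) - t\<close> evaluated at the normalized constraint values; hence it is nonnegative, positive
  definite, and blows up at the boundary. Positive definiteness of \<open>B\<^sub>x\<close> turns the decrease into
  asymptotic stability, and the blow-up together with compactness of the input sets yields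
  existence of minimizers and strict constraint satisfaction.\<close>

definition recentered_log :: "real \<Rightarrow> real" where
  "recentered_log t = - ln (1 - t) - t"

lemma recentered_log_nonneg: "t < 1 \<Longrightarrow> 0 \<le> recentered_log t"
  using ln_le_minus_one[of "1 - t"] by (simp add: recentered_log_def)

lemma recentered_log_pos:
  assumes "t < 1" "t \<noteq> 0"
  shows "0 < recentered_log t"
  using ln_le_minus_one[of "1 - t"] ln_eq_minus_one[of "1 - t"] assms
  by (force simp: recentered_log_def)

lemma recentered_log_subhomogeneous:
  assumes "t < 1" "0 \<le> s" "s \<le> 1"
  shows "recentered_log (s * t) \<le> s * recentered_log t"
proof -
  have "(1 - s) * ln 1 + s * ln (1 - t) \<le> ln ((1 - s) *\<^sub>R 1 + s *\<^sub>R (1 - t))"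
    using concave_onD[OF ln_concave, of s 1 "1 - t"] assms by simp
  then show ?thesis by (simp add: recentered_log_def algebra_simps)
qed

lemma continuous_on_recentered_log: "continuous_on {..<1} recentered_log"
  unfolding recentered_log_def by (intro continuous_intros) auto

lemma recentered_log_at_left_1: "filterlim recentered_log at_top (at_left 1)"
  unfolding recentered_log_def by real_asymp

lemma matrix_vector_mult_row: "(C *v z) $ i = C $ i \<bullet> z"
  by (simp add: matrix_vector_mult_def inner_vec_def mult.commute)

lemma polytope_set_halfspaces: "polytope_set C d = (\<Inter>i. {z. C $ i \<bullet> z \<le> d $ i})"
  by (auto simp: polytope_set_def matrix_vector_mult_row)

lemma convex_polytope_set: "convex (polytope_set C d)"
  by (simp add: polytope_set_halfspaces convex_INT convex_halfspace_le)

lemma interior_polytope_set: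
  fixes C :: "real^'n^'q::finite"
  assumes "\<forall>i. 0 < d $ i"
  shows "interior (polytope_set C d) = {z. \<forall>i. (C *v z) $ i < d $ i}"
proof
  show "interior (polytope_set C d) \<subseteq> {z. \<forall>i. (C *v z) $ i < d $ i}"
  proof (intro subsetI CollectI allI)
    fix z i assume z: "z \<in> interior (polytope_set C d)"
    show "(C *v z) $ i < d $ i"
    proof (cases "C $ i = 0")
      case True
      then show ?thesis using assms by (simp add: matrix_vector_mult_row)
    next
      case False
      have "interior (polytope_set C d) \<subseteq> interior {z. C $ i \<bullet> z \<le> d $ i}"
        by (rule interior_mono) (auto simp: polytope_set_halfspaces)
      then show ?thesis using z False by (auto simp: matrix_vector_mult_row)
    qed
  qed
  have "open {z. \<forall>i. (C *v z) $ i < d $ i}"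
    by (simp add: matrix_vector_mult_row Collect_all_eq open_INT open_halfspace_lt)
  then show "{z. \<forall>i. (C *v z) $ i < d $ i} \<subseteq> interior (polytope_set C d)"
    by (rule interior_maximal[rotated]) (auto simp: polytope_set_def less_imp_le)
qed

lemma bounded_polytope_set_row_nonzero:
  fixes C :: "real^'n^'q::finite"
  assumes "bounded (polytope_set C d)" "\<forall>i. 0 \<le> d $ i" "z \<noteq> 0"
  shows "\<exists>i. (C *v z) $ i \<noteq> 0"
proof (rule ccontr)
  assume "\<nexists>i. (C *v z) $ i \<noteq> 0"
  then have ray: "t *\<^sub>R z \<in> polytope_set C d" for t
    using assms(2) by (simp add: polytope_set_def matrix_vector_mult_row)
  obtain b where b: "\<forall>x\<in>polytope_set C d. norm x \<le> b"
    using assms(1) bounded_iff by blast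
  have "norm (((\<bar>b\<bar> + 1) / norm z) *\<^sub>R z) \<le> b"
    using b ray by blast
  then show False using assms(3) by simp
qed

section \<open>Recentered logarithmic barriers\<close>

lemma grad_eqI:
  assumes "GDERIV f x :> D"
  shows "grad f x = D"
  unfolding grad_def
proof (rule the_equality)
  fix D' assume "GDERIV f x :> D'"
  then have "(\<lambda>h. h \<bullet> D') = (\<lambda>h. h \<bullet> D)"
    using assms has_derivative_unique unfolding gderiv_def by blast
  then show "D' = D" by (simp add: fun_eq_iff vector_eq_ldot)
qed (fact assms)

lemma gderiv_lbar_i_0:
  fixes C :: "real^'n^'q::finite"
  assumes "0 < d $ i"
  shows "GDERIV (lbar_i C d i) 0 :> (1 / d $ i) *\<^sub>R C $ i"
proof -
  have eq: "lbar_i C d i = (\<lambda>z. - ln (- (C $ i \<bullet> z) + d $ i))"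
    by (auto simp: lbar_i_def matrix_vector_mult_row)
  have "GDERIV (\<lambda>z. - (C $ i \<bullet> z) + d $ i) 0 :> - C $ i"
    unfolding gderiv_def
    by (rule has_derivative_eq_rhs, (rule derivative_intros)+) (auto simp: inner_commute)
  moreover have "DERIV (\<lambda>y. - ln y) (- (C $ i \<bullet> 0) + d $ i) :> - (1 / d $ i)"
    using assms by (auto intro!: derivative_eq_intros)
  ultimately show ?thesis
    unfolding eq using GDERIV_DERIV_compose by fastforce
qed

lemma grad_lbar_0:
  fixes C :: "real^'n^'q::finite"
  assumes "\<forall>i. 0 < d $ i"
  shows "grad (lbar C d) 0 = (\<Sum>i\<in>UNIV. (1 / d $ i) *\<^sub>R C $ i)"
proof (rule grad_eqI)
  have "((\<lambda>z. \<Sum>i\<in>UNIV. lbar_i C d i z) has_derivative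
          (\<lambda>h. \<Sum>i\<in>UNIV. h \<bullet> ((1 / d $ i) *\<^sub>R C $ i))) (at 0)"
    using gderiv_lbar_i_0 assms unfolding gderiv_def by (intro has_derivative_sum) auto
  then show "GDERIV (lbar C d) 0 :> (\<Sum>i\<in>UNIV. (1 / d $ i) *\<^sub>R C $ i)"
    unfolding gderiv_def lbar_def[abs_def] by (simp add: inner_sum_right)
qed

lemma lbar_i_recentered:
  fixes C :: "real^'n^'q::finite"
  assumes "0 < d $ i" "(C *v z) $ i < d $ i"
  shows "lbar_i C d i z - lbar_i C d i 0 = - ln (1 - (C *v z) $ i / d $ i)"
proof -
  have "1 - (C *v z) $ i / d $ i = (d $ i - (C *v z) $ i) / d $ i"
    using assms by (simp add: field_simps)
  then show ?thesis
    using assms by (simp add: lbar_i_def ln_div)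
qed

text \<open>On the interior, both kinds of recentered barriers have this form (with weights \<open>1\<close>,
  resp. \<open>1 + w\<^sup>i\<close>): the linear terms cancel because the weights annihilate the gradient at the
  origin.\<close>
definition weighted_barrier :: "real^'n^'q::finite \<Rightarrow> real^'q \<Rightarrow> ('q \<Rightarrow> real) \<Rightarrow> real^'n \<Rightarrow> real"
  where "weighted_barrier C d c z = (\<Sum>i\<in>UNIV. c i * recentered_log ((C *v z) $ i / d $ i))"

lemma grad_recentered_eq_weighted_barrier:
  fixes C :: "real^'n^'q::finite"
  assumes d: "\<forall>i. 0 < d $ i" and z: "\<forall>i. (C *v z) $ i < d $ i"
  shows "grad_recentered C d z = weighted_barrier C d (\<lambda>_. 1) z"
proof -
  have "grad_recentered C d z
      = (\<Sum>i\<in>UNIV. lbar_i C d i z - lbar_i C d i 0) - (\<Sum>i\<in>UNIV. ((1 / d $ i) *\<^sub>R C $ i) \<bullet> z)"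
    by (simp add: grad_recentered_def grad_lbar_0[OF d] lbar_def sum_subtractf inner_sum_left)
  also have "\<dots> = (\<Sum>i\<in>UNIV. - ln (1 - (C *v z) $ i / d $ i) - (C *v z) $ i / d $ i)"
    using d z by (simp add: lbar_i_recentered matrix_vector_mult_row sum_subtractf)
  finally show ?thesis
    by (simp add: weighted_barrier_def recentered_log_def)
qed

lemma weight_recentered_eq_weighted_barrier:
  fixes C :: "real^'n^'q::finite"
  assumes d: "\<forall>i. 0 < d $ i" and z: "\<forall>i. (C *v z) $ i < d $ i"
    and w: "admissible_weight C d w"
  shows "weight_recentered C d w z = weighted_barrier C d (\<lambda>i. 1 + w $ i) z"
proof -
  have "(\<Sum>i\<in>UNIV. (1 + w $ i) *\<^sub>R ((1 / d $ i) *\<^sub>R C $ i)) = 0"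
    using w d by (simp add: admissible_weight_def grad_eqI[OF gderiv_lbar_i_0])
  then have "(\<Sum>i\<in>UNIV. (1 + w $ i) *\<^sub>R ((1 / d $ i) *\<^sub>R C $ i)) \<bullet> z = 0"
    by simp
  then have linear: "(\<Sum>i\<in>UNIV. (1 + w $ i) * ((C *v z) $ i / d $ i)) = 0"
    by (simp add: inner_sum_left matrix_vector_mult_row)
  have "weight_recentered C d w z = (\<Sum>i\<in>UNIV. (1 + w $ i) * - ln (1 - (C *v z) $ i / d $ i))"
    using d z by (simp add: weight_recentered_def lbar_i_recentered)
  also have "\<dots> = (\<Sum>i\<in>UNIV. (1 + w $ i) * - ln (1 - (C *v z) $ i / d $ i))
                  - (\<Sum>i\<in>UNIV. (1 + w $ i) * ((C *v z) $ i / d $ i))"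
    using linear by simp
  finally show ?thesis
    by (simp add: weighted_barrier_def recentered_log_def sum_subtractf[symmetric] algebra_simps)
qed

lemma recentered_log_barrier_weighted:
  fixes C :: "real^'n^'q::finite"
  assumes "recentered_log_barrier C d B" "\<forall>i. 0 < d $ i"
  shows "\<exists>c. (\<forall>i. 1 \<le> c i) \<and>
           (\<forall>z\<in>interior (polytope_set C d). B z = weighted_barrier C d c z)"
  using assms(1) unfolding recentered_log_barrier_def
proof (elim disjE exE conjE)
  assume "\<forall>z\<in>interior (polytope_set C d). B z = grad_recentered C d z"
  then show ?thesis
    using assms(2) by (auto simp: grad_recentered_eq_weighted_barrier interior_polytope_set
        intro!: exI[of _ "\<lambda>_. 1"])
next
  fix w assume "admissible_weight C d w"
    and "\<forall>z\<in>interior (polytope_set C d). B z = weight_recentered C d w z"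
  then show ?thesis
    using assms(2) by (auto simp: weight_recentered_eq_weighted_barrier admissible_weight_def
        interior_polytope_set intro!: exI[of _ "\<lambda>i. 1 + w $ i"])
qed

lemma normalized_constraint_less_one:
  fixes C :: "real^'n^'q::finite"
  shows "0 < d $ i \<Longrightarrow> (C *v z) $ i < d $ i \<Longrightarrow> (C *v z) $ i / d $ i < 1"
  using pos_divide_less_eq[of "d $ i" "(C *v z) $ i" 1] by simp

lemma recentered_log_le_weighted_barrier:
  assumes d: "\<forall>i. 0 < d $ i" and c: "\<forall>i. 1 \<le> c i" and z: "\<forall>i. (C *v z) $ i < d $ i"
  shows "recentered_log ((C *v z) $ i / d $ i) \<le> weighted_barrier C d c z"
proof -
  have nonneg: "0 \<le> recentered_log ((C *v z) $ j / d $ j)" for j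
    using d z by (simp add: recentered_log_nonneg normalized_constraint_less_one)
  have c_nonneg: "0 \<le> c j" for j
    using c by (meson order_trans zero_le_one)
  have "recentered_log ((C *v z) $ i / d $ i) \<le> c i * recentered_log ((C *v z) $ i / d $ i)"
    using c nonneg[of i] by (simp add: mult_le_cancel_right1)
  also have "\<dots> \<le> weighted_barrier C d c z"
    unfolding weighted_barrier_def
    by (rule member_le_sum) (use c_nonneg nonneg in auto)
  finally show ?thesis .
qed

lemma weighted_barrier_nonneg:
  assumes "\<forall>i. 0 < d $ i" "\<forall>i. 1 \<le> c i" "\<forall>i. (C *v z) $ i < d $ i"
  shows "0 \<le> weighted_barrier C d c z"
  using recentered_log_le_weighted_barrier[OF assms] recentered_log_nonneg assms
  by (meson normalized_constraint_less_one order_trans)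

lemma weighted_barrier_pos:
  fixes C :: "real^'n^'q::finite"
  assumes d: "\<forall>i. 0 < d $ i" and c: "\<forall>i. 1 \<le> c i" and z: "\<forall>i. (C *v z) $ i < d $ i"
    and "bounded (polytope_set C d)" "z \<noteq> 0"
  shows "0 < weighted_barrier C d c z"
proof -
  obtain i where "(C *v z) $ i \<noteq> 0"
    using bounded_polytope_set_row_nonzero assms(4,5) d less_imp_le by blast
  then have "0 < recentered_log ((C *v z) $ i / d $ i)"
    using d z by (intro recentered_log_pos) (auto simp: less_imp_neq[symmetric])
  then show ?thesis
    using recentered_log_le_weighted_barrier[OF d c z, of i] by linarith
qed

lemma weighted_barrier_subhomogeneous:
  assumes d: "\<forall>i. 0 < d $ i" and c: "\<forall>i. 1 \<le> c i" and z: "\<forall>i. (C *v z) $ i < d $ i"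
    and s: "0 \<le> s" "s \<le> 1"
  shows "weighted_barrier C d c (s *\<^sub>R z) \<le> s * weighted_barrier C d c z"
  unfolding weighted_barrier_def sum_distrib_left
proof (rule sum_mono)
  fix i
  have "recentered_log (s * ((C *v z) $ i / d $ i)) \<le> s * recentered_log ((C *v z) $ i / d $ i)"
    using d z s by (intro recentered_log_subhomogeneous) auto
  then show "c i * recentered_log ((C *v s *\<^sub>R z) $ i / d $ i)
      \<le> s * (c i * recentered_log ((C *v z) $ i / d $ i))"
    using c[rule_format, of i] mult_left_mono[of _ _ "c i"]
    by (fastforce simp: matrix_vector_mult_row algebra_simps)
qed

lemma continuous_on_weighted_barrier:
  assumes "\<forall>i. 0 < d $ i"
  shows "continuous_on {z. \<forall>i. (C *v z) $ i < d $ i} (weighted_barrier C d c)"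
proof -
  have "continuous_on {z. \<forall>i. (C *v z) $ i < d $ i} (\<lambda>z. recentered_log ((C *v z) $ i / d $ i))"
    for i
  proof (rule continuous_on_compose2[OF continuous_on_recentered_log])
    show "continuous_on {z. \<forall>i. (C *v z) $ i < d $ i} (\<lambda>z. (C *v z) $ i / d $ i)"
      unfolding matrix_vector_mult_row by (intro continuous_intros) (metis assms less_irrefl)
  qed (use assms normalized_constraint_less_one in auto)
  then show ?thesis
    unfolding weighted_barrier_def[abs_def] by (intro continuous_intros)
qed

text \<open>On a sequence approaching a facet \<open>C\<^sup>i z = d\<^sup>i\<close> from inside, the normalized value of that
  constraint tends to \<open>1\<close> from the left, where \<open>recentered_log\<close> blows up.\<close>
lemma weighted_barrier_bounded_limit:
  fixes C :: "real^'n^'q::finite"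
  assumes d: "\<forall>i. 0 < d $ i" and c: "\<forall>i. 1 \<le> c i"
    and zs: "\<forall>j. \<forall>i. (C *v zs j) $ i < d $ i" and lim: "zs \<longlonglongrightarrow> z"
    and bound: "\<forall>j. weighted_barrier C d c (zs j) \<le> b"
  shows "\<forall>i. (C *v z) $ i < d $ i"
proof (rule ccontr)
  assume "\<not> (\<forall>i. (C *v z) $ i < d $ i)"
  then obtain i where i: "d $ i \<le> (C *v z) $ i" by (auto simp: not_less)
  define t where "t j = (C *v zs j) $ i / d $ i" for j
  have lim_i: "(\<lambda>j. (C *v zs j) $ i) \<longlonglongrightarrow> (C *v z) $ i"
    unfolding matrix_vector_mult_row by (intro tendsto_intros lim)
  then have "t \<longlonglongrightarrow> (C *v z) $ i / d $ i"
    unfolding t_def using d by (auto intro!: tendsto_divide simp: less_imp_neq[symmetric])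
  moreover have "(C *v z) $ i \<le> d $ i"
    using zs by (intro LIMSEQ_le_const2[OF lim_i]) (auto simp: less_imp_le)
  with i have "(C *v z) $ i = d $ i"
    by simp
  then have "(C *v z) $ i / d $ i = 1"
    using d[rule_format, of i] by simp
  ultimately have "t \<longlonglongrightarrow> 1"
    by simp
  moreover have "\<forall>j. t j < 1"
    using zs d by (simp add: t_def normalized_constraint_less_one)
  ultimately have "filterlim t (at_left 1) sequentially"
    by (auto intro: tendsto_imp_filterlim_at_left always_eventually)
  then have "filterlim (\<lambda>j. recentered_log (t j)) at_top sequentially"
    using recentered_log_at_left_1 filterlim_compose by blast
  then have "\<forall>\<^sub>F j in sequentially. b < recentered_log (t j)"
    by (simp add: filterlim_at_top_dense)
  then obtain j where "b < recentered_log (t j)"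
    by (auto simp: eventually_sequentially)
  then show False
    using recentered_log_le_weighted_barrier[OF d c spec[OF zs, of j], of i] bound[rule_format, of j]
    by (simp add: t_def)
qed

lemma recentered_barrier_bounded_limit:
  assumes Bf: "recentered_barrier S Bf" and "closed S"
    and zs: "\<forall>j. zs j \<in> interior S" and lim: "zs \<longlonglongrightarrow> z" and bound: "\<forall>j. Bf (zs j) \<le> b"
  shows "z \<in> interior S"
proof (rule ccontr)
  assume z: "z \<notin> interior S"
  have "z \<in> S"
    using closed_sequentially[OF \<open>closed S\<close>] zs lim interior_subset by blast
  then have "z \<in> frontier S"
    using z closure_subset by (auto simp: frontier_def)
  then have "filterlim Bf at_top (at z within interior S)"
    using Bf by (simp add: recentered_barrier_def)
  moreover have "filterlim zs (at z within interior S) sequentially"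
    using zs lim z by (auto simp: filterlim_at intro!: always_eventually)
  ultimately have "filterlim (\<lambda>j. Bf (zs j)) at_top sequentially"
    by (rule filterlim_compose)
  then have "\<forall>\<^sub>F j in sequentially. b < Bf (zs j)"
    by (simp add: filterlim_at_top_dense)
  then show False
    using bound by (auto simp: eventually_sequentially not_less[symmetric])
qed

locale log_barrier =
  fixes C :: "real^'n^'q::finite" and d :: "real^'q" and B :: "real^'n \<Rightarrow> real"
  assumes d_pos: "\<forall>i. 0 < d $ i"
    and compact_polytope: "compact (polytope_set C d)"
    and recentered: "recentered_log_barrier C d B"
begin

definition weights :: "'q \<Rightarrow> real" where
  "weights = (SOME c. (\<forall>i. 1 \<le> c i) \<and>
     (\<forall>z\<in>interior (polytope_set C d). B z = weighted_barrier C d c z))"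

lemma weights_ge_1: "\<forall>i. 1 \<le> weights i"
  and eq_weighted_barrier: "z \<in> interior (polytope_set C d) \<Longrightarrow> B z = weighted_barrier C d weights z"
  using someI_ex[OF recentered_log_barrier_weighted[OF recentered d_pos]]
  unfolding weights_def by blast+

lemma interior_iff: "z \<in> interior (polytope_set C d) \<longleftrightarrow> (\<forall>i. (C *v z) $ i < d $ i)"
  by (simp add: interior_polytope_set[OF d_pos])

lemma zero_in_interior: "0 \<in> interior (polytope_set C d)"
  using d_pos by (simp add: interior_iff)

lemma nonneg: "z \<in> interior (polytope_set C d) \<Longrightarrow> 0 \<le> B z"
  using weighted_barrier_nonneg[OF d_pos weights_ge_1] by (simp add: eq_weighted_barrier interior_iff)

lemma continuous: "continuous_on (interior (polytope_set C d)) B"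
proof (rule continuous_on_eq)
  show "continuous_on (interior (polytope_set C d)) (weighted_barrier C d weights)"
    using continuous_on_weighted_barrier[OF d_pos] by (simp add: interior_polytope_set[OF d_pos])
qed (simp add: eq_weighted_barrier)

lemma bounded_limit_in_interior:
  assumes "\<forall>j. zs j \<in> interior (polytope_set C d)" "zs \<longlonglongrightarrow> z" "\<forall>j. B (zs j) \<le> b"
  shows "z \<in> interior (polytope_set C d)"
  using weighted_barrier_bounded_limit[OF d_pos weights_ge_1, where zs = zs and z = z and b = b] assms
  by (simp add: eq_weighted_barrier interior_iff)

lemma subhomogeneous:
  assumes "z \<in> interior (polytope_set C d)" "0 \<le> s" "s \<le> 1"
  shows "B (s *\<^sub>R z) \<le> s * B z"
proof -
  have "s *\<^sub>R z \<in> interior (polytope_set C d)"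
    using convexD[OF convex_interior[OF convex_polytope_set] zero_in_interior assms(1), of "1 - s" s]
      assms(2,3) by simp
  then show ?thesis
    using weighted_barrier_subhomogeneous[OF d_pos weights_ge_1 _ assms(2,3)] assms(1)
    by (simp add: eq_weighted_barrier interior_iff)
qed

text \<open>\<open>B\<close> attains a positive minimum on a small sphere inside the polytope, and by
  subhomogeneity every point outside that sphere has at least this barrier value.\<close>
lemma uniformly_positive:
  assumes e: "0 < e"
  shows "\<exists>m>0. \<forall>z\<in>interior (polytope_set C d). e \<le> norm z \<longrightarrow> m \<le> B z"
proof -
  obtain r0 where r0: "r0 > 0" "cball 0 r0 \<subseteq> interior (polytope_set C d)"
    using open_contains_cball zero_in_interior open_interior by blast
  define r where "r = min e r0"
  have r: "r > 0" "r \<le> e" "sphere 0 r \<subseteq> interior (polytope_set C d)"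
    using r0 e by (auto simp: r_def)
  have "continuous_on (sphere 0 r) B"
    using continuous r(3) continuous_on_subset by blast
  moreover have "sphere (0::real^'n) r \<noteq> {}"
    using r by simp
  ultimately obtain w where w: "w \<in> sphere 0 r" "\<forall>y\<in>sphere 0 r. B w \<le> B y"
    using continuous_attains_inf[OF compact_sphere] by blast
  have "0 < B w"
    using weighted_barrier_pos[OF d_pos weights_ge_1 _ compact_imp_bounded[OF compact_polytope]]
      w(1) r eq_weighted_barrier[of w] interior_iff[of w] by auto
  moreover have "B w \<le> B z" if z: "z \<in> interior (polytope_set C d)" "e \<le> norm z" for z
  proof -
    define s where "s = r / norm z"
    have nz: "0 < norm z"
      using r z by linarith
    then have s: "0 \<le> s" "s \<le> 1"
      using r z by (auto simp: s_def pos_divide_le_eq)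
    have "s *\<^sub>R z \<in> sphere 0 r"
      using r nz by (simp add: s_def)
    then have "B w \<le> B (s *\<^sub>R z)"
      using w by blast
    also have "\<dots> \<le> s * B z"
      using subhomogeneous[OF z(1) s] .
    also have "\<dots> \<le> B z"
      using nonneg[OF z(1)] s by (simp add: mult_left_le_one_le)
    finally show ?thesis .
  qed
  ultimately show ?thesis
    by blast
qed

end

lemma tendsto_matrix_vector_mult [tendsto_intros]:
  "(f \<longlongrightarrow> a) F \<Longrightarrow> ((\<lambda>j. (G :: real^'n::finite^'m::finite) *v f j) \<longlongrightarrow> G *v a) F"
  by (rule isCont_tendsto_compose[OF matrix_vector_mult_linear_continuous_at])

lemma tendsto_apply: "(s \<longlongrightarrow> l) F \<Longrightarrow> ((\<lambda>j. s j k) \<longlongrightarrow> l k) F"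
  by (rule continuous_on_tendsto_compose[OF continuous_on_product_coordinates]) auto

lemma quadratic_form_congruence:
  fixes G :: "real^'n^'m" and P :: "real^'m^'m"
  shows "y \<bullet> ((transpose G ** P ** G) *v y) = (G *v y) \<bullet> (P *v (G *v y))"
proof -
  have "(transpose G ** P ** G) *v y = transpose G *v (P *v (G *v y))"
    by (simp add: matrix_vector_mul_assoc matrix_mul_assoc)
  then have "y \<bullet> ((transpose G ** P ** G) *v y) = ((P *v (G *v y)) v* G) \<bullet> y"
    by (simp add: inner_commute)
  also have "\<dots> = (G *v y) \<bullet> (P *v (G *v y))"
    using dot_lmul_matrix[of "P *v (G *v y)" G y] by (simp add: inner_commute)
  finally show ?thesis .
qed

lemma quadratic_form_lyapunov_equation:
  fixes AK P Q M :: "real^'n^'n" and K :: "real^'n^'m" and R :: "real^'m^'m"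
  assumes "P = transpose AK ** P ** AK + transpose K ** R ** K + Q + eps *\<^sub>R M"
  shows "y \<bullet> (P *v y) = (AK *v y) \<bullet> (P *v (AK *v y)) + (K *v y) \<bullet> (R *v (K *v y))
           + y \<bullet> (Q *v y) + eps * (y \<bullet> (M *v y))"
proof -
  have "y \<bullet> (P *v y) = y \<bullet> ((transpose AK ** P ** AK) *v y) + y \<bullet> ((transpose K ** R ** K) *v y)
      + y \<bullet> (Q *v y) + y \<bullet> ((eps *\<^sub>R M) *v y)"
    by (subst assms) (simp add: matrix_vector_mult_add_rdistrib inner_add_right)
  then show ?thesis
    by (simp add: quadratic_form_congruence scaleR_matrix_vector_assoc[symmetric])
qed

lemma pd_mat_quadratic_nonneg: "pd_mat P \<Longrightarrow> 0 \<le> y \<bullet> (P *v y)"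
  by (cases "y = 0") (auto simp: pd_mat_def less_imp_le)

lemma scaleR_in_interior_convex:
  fixes S :: "'a::euclidean_space set"
  assumes "convex S" "0 \<in> interior S" "y \<in> S" "0 \<le> l" "l < 1"
  shows "l *\<^sub>R y \<in> interior S"
  using mem_interior_convex_shrink[OF assms(1-3), of "1 - l"] assms(4,5) by (simp add: algebra_simps)

lemma interior_imp_scaleR_gt_1:
  fixes x :: "'a::real_normed_vector"
  assumes "x \<in> interior S"
  shows "\<exists>c>1. c *\<^sub>R x \<in> S"
proof -
  obtain e where e: "0 < e" "ball x e \<subseteq> S"
    using assms by (meson mem_interior)
  define t where "t = e / 2 / (norm x + 1)"
  have "0 < norm x + 1"
    by (smt (verit) norm_ge_zero)
  then have t: "0 < t" "t * (norm x + 1) = e / 2"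
    using e(1) by (simp_all add: t_def field_simps)
  have "dist x ((1 + t) *\<^sub>R x) = t * norm x"
    using t(1) by (simp add: dist_norm algebra_simps)
  also have "\<dots> < e"
    using t e(1) by (simp add: algebra_simps)
  finally have "(1 + t) *\<^sub>R x \<in> S"
    using e(2) by auto
  then show ?thesis
    using t(1) by (intro exI[of _ "1 + t"]) simp
qed

lemma continuous_on_interior_tendsto:
  fixes g :: "'a::t2_space \<Rightarrow> 'b::topological_space"
  assumes "continuous_on (interior S) g" "y \<in> interior S" "(f \<longlongrightarrow> y) F"
  shows "((\<lambda>j. g (f j)) \<longlongrightarrow> g y) F"
proof -
  have "isCont g y"
    using assms(1,2) continuous_on_eq_continuous_at open_interior by blast
  then show ?thesis
    using assms(3) by (rule isCont_tendsto_compose)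
qed

lemma pred_state_cong: "(\<forall>j<k. u j = v j) \<Longrightarrow> pred_state A B x u k = pred_state A B x v k"
  by (induction k) auto

lemma pred_state_Suc_shift:
  "pred_state A B x u (Suc k) = pred_state A B (A *v x + B *v u 0) (\<lambda>j. u (Suc j)) k"
  by (induction k) auto

lemma pred_state_scaleR:
  "pred_state A B (c *\<^sub>R x) (\<lambda>k. c *\<^sub>R u k) k = c *\<^sub>R pred_state A B x u k"
  by (induction k) (auto simp: matrix_vector_mult_scaleR scaleR_add_right)

lemma continuous_on_pred_state: "continuous_on S (\<lambda>x. pred_state A B x u k)"
proof (induction k)
  case (Suc k)
  then show ?case
    using continuous_on_compose2[OF matrix_vector_mult_linear_continuous_on[of UNIV A] Suc]
    by (auto intro!: continuous_intros)
qed simp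

lemma tendsto_pred_state:
  assumes "\<And>k. ((\<lambda>j. s j k) \<longlongrightarrow> l k) F"
  shows "((\<lambda>j. pred_state A B x (s j) k) \<longlongrightarrow> pred_state A B x l k) F"
  by (induction k) (auto intro!: tendsto_intros assms)

section \<open>A discrete-time Lyapunov theorem\<close>

lemma funpow_in_invariant: "(\<And>x. x \<in> D \<Longrightarrow> f x \<in> D) \<Longrightarrow> x \<in> D \<Longrightarrow> (f ^^ k) x \<in> D"
  by (induction k) auto

lemma lyapunov_nonincreasing:
  assumes invariant: "\<And>x. x \<in> D \<Longrightarrow> f x \<in> D"
    and decrease: "\<And>x. x \<in> D \<Longrightarrow> V (f x) + W x \<le> V x"
    and W_nonneg: "\<And>x. x \<in> D \<Longrightarrow> 0 \<le> (W x :: real)" and x: "x \<in> D"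
  shows "V ((f ^^ k) x) \<le> V x"
proof (induction k)
  case (Suc k)
  have "(f ^^ k) x \<in> D"
    using funpow_in_invariant[where f = f] invariant x by blast
  then show ?case
    using Suc decrease W_nonneg by fastforce
qed simp

lemma lyapunov_trajectory_tendsto_0:
  fixes f :: "'a::real_normed_vector \<Rightarrow> 'a" and V W :: "'a \<Rightarrow> real"
  assumes invariant: "\<And>x. x \<in> D \<Longrightarrow> f x \<in> D"
    and decrease: "\<And>x. x \<in> D \<Longrightarrow> V (f x) + W x \<le> V x"
    and W_nonneg: "\<And>x. x \<in> D \<Longrightarrow> 0 \<le> W x" and W_le_V: "\<And>x. x \<in> D \<Longrightarrow> W x \<le> V x"
    and W_pos: "\<And>e. 0 < e \<Longrightarrow> \<exists>m>0. \<forall>x\<in>D. e \<le> norm x \<longrightarrow> m \<le> W x"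
    and x: "x \<in> D"
  shows "(\<lambda>k. (f ^^ k) x) \<longlonglongrightarrow> 0"
proof -
  define z where "z k = (f ^^ k) x" for k
  have z: "z k \<in> D" for k
    unfolding z_def using funpow_in_invariant[where f = f] invariant x by blast
  have partial_sums: "(\<Sum>k<n. W (z k)) \<le> V x - V (z n)" for n
  proof (induction n)
    case (Suc n)
    then show ?case
      using decrease[OF z[of n]] by (simp add: z_def)
  qed (simp add: z_def)
  have "summable (\<lambda>k. W (z k))"
  proof (rule summableI_nonneg_bounded)
    show "(\<Sum>k<n. W (z k)) \<le> V x" for n
      using partial_sums[of n] W_nonneg[OF z[of n]] W_le_V[OF z[of n]] by linarith
  qed (use W_nonneg z in auto)
  then have W_lim: "(\<lambda>k. W (z k)) \<longlonglongrightarrow> 0"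
    by (rule summable_LIMSEQ_zero)
  have "\<forall>\<^sub>F k in sequentially. dist (z k) 0 < r" if "0 < r" for r
  proof -
    obtain m where m: "0 < m" "\<forall>x\<in>D. r \<le> norm x \<longrightarrow> m \<le> W x"
      using W_pos[OF \<open>0 < r\<close>] by blast
    show ?thesis
      using order_tendstoD(2)[OF W_lim m(1)]
    proof (rule eventually_mono)
      fix k assume "W (z k) < m"
      then show "dist (z k) 0 < r"
        using m(2) z[of k] by (auto simp: not_le[symmetric])
    qed
  qed
  then show ?thesis
    by (simp add: tendsto_iff z_def)
qed

text \<open>\<open>f 0 = 0\<close> is not assumed: it follows from \<open>V 0 \<le> 0\<close> and positive definiteness of \<open>W\<close>.\<close>
lemma lyapunov_asymptotically_stable:
  fixes f :: "'a::real_normed_vector \<Rightarrow> 'a" and V W :: "'a \<Rightarrow> real"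
  assumes "0 \<in> D"
    and invariant: "\<And>x. x \<in> D \<Longrightarrow> f x \<in> D"
    and decrease: "\<And>x. x \<in> D \<Longrightarrow> V (f x) + W x \<le> V x"
    and W_nonneg: "\<And>x. x \<in> D \<Longrightarrow> 0 \<le> W x" and W_le_V: "\<And>x. x \<in> D \<Longrightarrow> W x \<le> V x"
    and W_pos: "\<And>e. 0 < e \<Longrightarrow> \<exists>m>0. \<forall>x\<in>D. e \<le> norm x \<longrightarrow> m \<le> W x"
    and V_small: "\<And>m. 0 < m \<Longrightarrow> \<exists>\<delta>>0. \<forall>x\<in>D. norm x < \<delta> \<longrightarrow> V x < m"
  shows "asymptotically_stable_on f D"
proof -
  have traj: "(f ^^ k) x \<in> D" if "x \<in> D" for x k
    using funpow_in_invariant[where f = f] invariant that by blast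
  have V_mono: "V ((f ^^ k) x) \<le> V x" if "x \<in> D" for x k
    using lyapunov_nonincreasing[where D = D and f = f and V = V and W = W]
      invariant decrease W_nonneg that by blast
  have "V 0 \<le> 0"
  proof (rule ccontr)
    assume "\<not> V 0 \<le> 0"
    then show False
      using V_small[of "V 0"] \<open>0 \<in> D\<close> by force
  qed
  then have "W (f 0) \<le> 0"
    using decrease[OF \<open>0 \<in> D\<close>] W_nonneg[OF \<open>0 \<in> D\<close>] W_le_V[OF invariant[OF \<open>0 \<in> D\<close>]] by linarith
  have "f 0 = 0"
  proof (rule ccontr)
    assume "f 0 \<noteq> 0"
    then obtain m where "0 < m" "\<forall>x\<in>D. norm (f 0) \<le> norm x \<longrightarrow> m \<le> W x"
      using W_pos[of "norm (f 0)"] by auto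
    then show False
      using \<open>W (f 0) \<le> 0\<close> invariant[OF \<open>0 \<in> D\<close>] by fastforce
  qed
  moreover have "\<exists>\<delta>>0. \<forall>x\<in>D. norm x < \<delta> \<longrightarrow> (\<forall>k. norm ((f ^^ k) x) < e)" if "0 < e" for e
  proof -
    obtain m where m: "0 < m" "\<forall>x\<in>D. e \<le> norm x \<longrightarrow> m \<le> W x"
      using W_pos[OF \<open>0 < e\<close>] by blast
    obtain \<delta> where \<delta>: "0 < \<delta>" "\<forall>x\<in>D. norm x < \<delta> \<longrightarrow> V x < m"
      using V_small[OF m(1)] by blast
    have "norm ((f ^^ k) x) < e" if x: "x \<in> D" "norm x < \<delta>" for x k
    proof (rule ccontr)
      assume "\<not> norm ((f ^^ k) x) < e"
      then have "m \<le> W ((f ^^ k) x)"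
        using m(2) traj[OF x(1)] by simp
      moreover have "W ((f ^^ k) x) \<le> V x"
        using W_le_V[OF traj[OF x(1)]] V_mono[OF x(1)] by (rule order_trans)
      ultimately show False
        using \<delta>(2) x by fastforce
    qed
    then show ?thesis
      using \<delta>(1) by blast
  qed
  ultimately show ?thesis
    unfolding asymptotically_stable_on_def
    using \<open>0 \<in> D\<close> lyapunov_trajectory_tendsto_0[OF invariant decrease W_nonneg W_le_V W_pos]
    by blast
qed

section \<open>Barrier based MPC\<close>

locale barrier_mpc =
  fixes A :: "real^'n::finite^'n" and B :: "real^'m::finite^'n"
    and Cx :: "real^'n^'qx::finite" and dx :: "real^'qx"
    and Cu :: "real^'m^'qu::finite" and du :: "real^'qu"
    and Q :: "real^'n^'n" and R :: "real^'m^'m" and N :: nat and eps :: real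
    and K :: "real^'n^'m" and M :: "real^'n^'n" and P :: "real^'n^'n"
    and Nset :: "(real^'n) set" and Xf :: "(real^'n) set"
    and Bx :: "real^'n \<Rightarrow> real" and Bu :: "real^'m \<Rightarrow> real" and Bf :: "real^'n \<Rightarrow> real"
  assumes state_barrier: "log_barrier Cx dx Bx"
    and input_barrier: "log_barrier Cu du Bu"
    and Q_psd: "psd_mat Q" and R_pd: "pd_mat R" and P_pd: "pd_mat P"
    and N_ge1: "N \<ge> 1" and eps_pos: "eps > 0"
    and local_bound: "\<forall>x\<in>Nset. x \<in> interior (polytope_set Cx dx) \<and>
        K *v x \<in> interior (polytope_set Cu du) \<and> Bx x + Bu (K *v x) \<le> x \<bullet> (M *v x)"
    and P_eq: "P = transpose (A + B ** K) ** P ** (A + B ** K) + transpose K ** R ** K + Q + eps *\<^sub>R M"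
    and Xf_convex: "convex Xf" and Xf_compact: "compact Xf" and Xf_subset: "Xf \<subseteq> Nset"
    and terminal_barrier: "recentered_barrier Xf Bf"
    and terminal_invariant: "\<forall>x\<in>interior Xf. (A + B ** K) *v x \<in> interior Xf \<and>
        Bf ((A + B ** K) *v x) - Bf x \<le> 0"
begin

sublocale bx: log_barrier Cx dx Bx by (rule state_barrier)
sublocale bu: log_barrier Cu du Bu by (rule input_barrier)

abbreviation "X \<equiv> polytope_set Cx dx"
abbreviation "U \<equiv> polytope_set Cu du"
abbreviation "AK \<equiv> A + B ** K"
abbreviation "XN \<equiv> feasible_set A B X U Xf N"
abbreviation "pred \<equiv> pred_state A B"
abbreviation "admissible \<equiv> strictly_feasible A B X U Xf N"
abbreviation "cost \<equiv> barrier_cost A B Q R P eps Bx Bu Bf N"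

definition stage_cost :: "real^'n \<Rightarrow> real^'m \<Rightarrow> real" where
  "stage_cost y v = y \<bullet> (Q *v y) + v \<bullet> (R *v v) + eps * Bu v + eps * Bx y"

definition terminal_cost :: "real^'n \<Rightarrow> real" where
  "terminal_cost y = y \<bullet> (P *v y) + eps * Bf y"

lemma cost_eq: "cost x u = (\<Sum>k<N. stage_cost (pred x u k) (u k)) + terminal_cost (pred x u N)"
  by (simp add: barrier_cost_def stage_cost_def terminal_cost_def Let_def)

lemma stage_cost_ge:
  assumes "y \<in> interior X" "v \<in> interior U"
  shows "eps * Bx y \<le> stage_cost y v" "eps * Bu v \<le> stage_cost y v" "0 \<le> stage_cost y v"
  using bx.nonneg[OF assms(1)] bu.nonneg[OF assms(2)] pd_mat_quadratic_nonneg[OF R_pd, of v]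
    Q_psd eps_pos
  by (auto simp: stage_cost_def psd_mat_def intro!: add_nonneg_nonneg)

lemma zero_in_interior_Xf: "0 \<in> interior Xf"
  using terminal_barrier by (simp add: recentered_barrier_def)

lemma terminal_barrier_nonneg: "y \<in> interior Xf \<Longrightarrow> 0 \<le> Bf y"
  using terminal_barrier by (simp add: recentered_barrier_def)

lemma terminal_cost_ge:
  assumes "y \<in> interior Xf"
  shows "eps * Bf y \<le> terminal_cost y" "0 \<le> terminal_cost y"
  using terminal_barrier_nonneg[OF assms] pd_mat_quadratic_nonneg[OF P_pd, of y] eps_pos
  by (auto simp: terminal_cost_def)

lemma stage_cost_le_cost:
  assumes "admissible x u" "k < N"
  shows "stage_cost (pred x u k) (u k) \<le> cost x u"
proof -
  have "\<forall>j<N. 0 \<le> stage_cost (pred x u j) (u j)"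
    using assms(1) stage_cost_ge(3) by (simp add: strictly_feasible_def)
  then have "stage_cost (pred x u k) (u k) \<le> (\<Sum>j<N. stage_cost (pred x u j) (u j))"
    using assms(2) by (intro member_le_sum) auto
  then show ?thesis
    using terminal_cost_ge(2)[of "pred x u N"] assms(1) by (simp add: cost_eq strictly_feasible_def)
qed

lemma terminal_barrier_le_cost:
  assumes "admissible x u"
  shows "eps * Bf (pred x u N) \<le> cost x u"
proof -
  have "0 \<le> (\<Sum>j<N. stage_cost (pred x u j) (u j))"
    using assms stage_cost_ge(3) by (auto simp: strictly_feasible_def intro: sum_nonneg)
  then show ?thesis
    using terminal_cost_ge(1)[of "pred x u N"] assms by (simp add: cost_eq strictly_feasible_def)
qed

lemma admissible_initial:
  assumes "admissible x u"
  shows "x \<in> interior X \<and> u 0 \<in> interior U"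
proof -
  have "0 < N"
    using N_ge1 by simp
  then show ?thesis
    using assms unfolding strictly_feasible_def by (metis pred_state.simps(1))
qed

lemma AK_mult: "AK *v y = A *v y + B *v (K *v y)"
  by (simp add: matrix_vector_mult_add_rdistrib matrix_vector_mul_assoc)

lemma interior_terminal_admissible: "y \<in> interior Xf \<Longrightarrow> y \<in> interior X \<and> K *v y \<in> interior U"
  using local_bound Xf_subset interior_subset by blast

text \<open>The terminal cost is a control Lyapunov function for the feedback \<open>K\<close> on \<open>Xf\<close>, with the barrier
  terms of the stage cost absorbed by \<open>\<epsilon> M\<close> in the Lyapunov equation for \<open>P\<close>.\<close>
lemma terminal_cost_decrease:
  assumes y: "y \<in> interior Xf"
  shows "stage_cost y (K *v y) + terminal_cost (AK *v y) \<le> terminal_cost y"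
proof -
  have "Bx y + Bu (K *v y) \<le> y \<bullet> (M *v y)"
    using local_bound Xf_subset y interior_subset by blast
  moreover have "Bf (AK *v y) \<le> Bf y"
    using terminal_invariant y by auto
  ultimately show ?thesis
    using eps_pos mult_left_mono[of _ _ eps]
    unfolding stage_cost_def terminal_cost_def quadratic_form_lyapunov_equation[OF P_eq, of y]
    by (smt (verit) distrib_left)
qed

lemma continuous_on_terminal_cost: "continuous_on (interior Xf) terminal_cost"
proof -
  have "isCont Bf y" if "y \<in> interior Xf" for y
    using terminal_barrier that has_derivative_continuous
    by (fastforce simp: recentered_barrier_def gderiv_def)
  then show ?thesis
    unfolding terminal_cost_def[abs_def]
    by (intro continuous_intros continuous_at_imp_continuous_on) auto
qed

lemma terminal_cost_0: "terminal_cost 0 = 0"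
  using terminal_barrier by (simp add: terminal_cost_def recentered_barrier_def)

definition shifted_input :: "real^'n \<Rightarrow> (nat \<Rightarrow> real^'m) \<Rightarrow> nat \<Rightarrow> real^'m" where
  "shifted_input x u k = (if Suc k < N then u (Suc k) else K *v pred x u N)"

lemma pred_shifted_input:
  "k < N \<Longrightarrow> pred (A *v x + B *v u 0) (shifted_input x u) k = pred x u (Suc k)"
  by (subst pred_state_Suc_shift, rule pred_state_cong) (auto simp: shifted_input_def)

lemma pred_shifted_input_N: "pred (A *v x + B *v u 0) (shifted_input x u) N = AK *v pred x u N"
proof -
  obtain n where n: "Suc n = N"
    using N_ge1 by (cases N) auto
  have "pred (A *v x + B *v u 0) (shifted_input x u) (Suc n)
      = A *v pred (A *v x + B *v u 0) (shifted_input x u) n + B *v shifted_input x u n"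
    by (rule pred_state.simps(2))
  also have "\<dots> = AK *v pred x u N"
    using n pred_shifted_input[of n x u]
    by (simp add: shifted_input_def AK_mult del: pred_state.simps(2))
  finally show ?thesis
    using n by simp
qed

lemma admissible_shifted_input:
  assumes u: "admissible x u"
  shows "admissible (A *v x + B *v u 0) (shifted_input x u)"
proof -
  have xN: "pred x u N \<in> interior Xf"
    using u by (simp add: strictly_feasible_def)
  have "pred x u (Suc k) \<in> interior X" if "k < N" for k
    using u that interior_terminal_admissible[OF xN]
    by (cases "Suc k = N") (auto simp: strictly_feasible_def simp del: pred_state.simps(2))
  then show ?thesis
    using u interior_terminal_admissible[OF xN] terminal_invariant xN
    by (auto simp: strictly_feasible_def shifted_input_def pred_shifted_input pred_shifted_input_N
        simp del: pred_state.simps(2))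
qed

text \<open>The new last stage and terminal cost are paid for by the decrease of the terminal cost
  under \<open>K\<close>.\<close>
lemma cost_shifted_input:
  assumes u: "admissible x u"
  shows "cost (A *v x + B *v u 0) (shifted_input x u) + stage_cost x (u 0) \<le> cost x u"
proof -
  obtain n where n: "Suc n = N"
    using N_ge1 by (cases N) auto
  then have "n < N"
    by auto
  let ?stages = "\<Sum>k<n. stage_cost (pred x u (Suc k)) (u (Suc k))"
  let ?g = "\<lambda>k. stage_cost (pred (A *v x + B *v u 0) (shifted_input x u) k) (shifted_input x u k)"
  have "(\<Sum>k<n. ?g k) = ?stages"
    using Suc_le_eq[of n N] n
    by (intro sum.cong) (auto simp: pred_shifted_input shifted_input_def simp del: pred_state.simps(2))
  moreover have "?g n = stage_cost (pred x u N) (K *v pred x u N)"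
    using pred_shifted_input[OF \<open>n < N\<close>, of x u] n
    by (simp add: shifted_input_def del: pred_state.simps(2))
  ultimately have "cost (A *v x + B *v u 0) (shifted_input x u)
      = ?stages + stage_cost (pred x u N) (K *v pred x u N) + terminal_cost (AK *v pred x u N)"
    using sum.lessThan_Suc[of ?g n] n
    by (simp add: cost_eq pred_shifted_input_N del: pred_state.simps(2))
  also have "\<dots> \<le> ?stages + terminal_cost (pred x u N)"
    using terminal_cost_decrease u by (simp add: strictly_feasible_def)
  also have "\<dots> = cost x u - stage_cost x (u 0)"
    using sum.lessThan_Suc_shift[of "\<lambda>k. stage_cost (pred x u k) (u k)" n] n
    by (simp add: cost_eq del: pred_state.simps(2))
  finally show ?thesis
    by simp
qed

lemma terminal_candidate:
  assumes x: "x \<in> interior Xf"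
  shows "\<exists>u. admissible x u \<and> cost x u \<le> terminal_cost x"
proof -
  define y where "y k = (((*v) AK) ^^ k) x" for k
  define u where "u k = K *v y k" for k
  have pred_u: "pred x u k = y k" for k
    by (induction k) (simp_all add: u_def y_def AK_mult[symmetric])
  have y_Suc: "y (Suc k) = AK *v y k" for k
    by (simp add: y_def)
  have in_Xf: "y k \<in> interior Xf" for k
    by (induction k) (use x terminal_invariant in \<open>auto simp: y_def\<close>)
  have "(\<Sum>k<n. stage_cost (y k) (u k)) + terminal_cost (y n) \<le> terminal_cost x" for n
  proof (induction n)
    case (Suc n)
    then show ?case
      using terminal_cost_decrease[OF in_Xf[of n]] by (simp add: u_def y_Suc)
  qed (simp add: y_def)
  moreover have "admissible x u"
    using in_Xf interior_terminal_admissible by (auto simp: strictly_feasible_def pred_u u_def)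
  ultimately show ?thesis
    by (auto simp: cost_eq pred_u)
qed

lemma open_admissible: "open {x. admissible x u}"
proof (cases "\<forall>k<N. u k \<in> interior U")
  case True
  then have "{x. admissible x u} =
      (\<Inter>k\<in>{..<N}. (\<lambda>x. pred x u k) -` interior X) \<inter> (\<lambda>x. pred x u N) -` interior Xf"
    by (auto simp: strictly_feasible_def)
  then show ?thesis
    by (simp add: open_Int open_INT open_vimage continuous_on_pred_state)
next
  case False
  then have "{x. admissible x u} = {}"
    by (auto simp: strictly_feasible_def)
  then show ?thesis
    by simp
qed

lemma admissible_imp_interior_XN:
  assumes "admissible x u"
  shows "x \<in> interior XN"
proof -
  have "x \<in> XN" if "admissible x u" for x
  proof -
    have "\<forall>k<N. u k \<in> U \<and> pred x u k \<in> X" "pred x u N \<in> Xf"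
      using that by (auto simp: strictly_feasible_def intro: interior_subset[THEN subsetD])
    moreover have "x \<in> X"
      using calculation(1)[rule_format, of 0] N_ge1 by simp
    ultimately show ?thesis
      unfolding feasible_set_def by blast
  qed
  then have "{x. admissible x u} \<subseteq> interior XN"
    using open_admissible by (intro interior_maximal) auto
  then show ?thesis
    using assms by blast
qed

lemma zero_in_interior_XN: "0 \<in> interior XN"
  using terminal_candidate[OF zero_in_interior_Xf] admissible_imp_interior_XN by blast

lemma admissible_exists:
  assumes "x \<in> interior XN"
  shows "\<exists>u. admissible x u"
proof -
  obtain c where c: "1 < c" "c *\<^sub>R x \<in> XN"
    using interior_imp_scaleR_gt_1[OF assms] by blast
  then obtain v where v: "\<forall>k<N. v k \<in> U \<and> pred (c *\<^sub>R x) v k \<in> X" "pred (c *\<^sub>R x) v N \<in> Xf"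
    by (auto simp: feasible_set_def)
  define l where "l = 1 / c"
  have l: "0 \<le> l" "l < 1"
    using c(1) by (auto simp: l_def)
  have pred_lv: "pred x (\<lambda>k. l *\<^sub>R v k) k = l *\<^sub>R pred (c *\<^sub>R x) v k" for k
    using pred_state_scaleR[of A B l "c *\<^sub>R x" v k] c(1) by (simp add: l_def)
  have "admissible x (\<lambda>k. l *\<^sub>R v k)"
    unfolding strictly_feasible_def pred_lv using v l
    by (auto intro!: scaleR_in_interior_convex convex_polytope_set bx.zero_in_interior
        bu.zero_in_interior zero_in_interior_Xf Xf_convex)
  then show ?thesis
    by blast
qed

abbreviation "minimizer \<equiv> is_barrier_minimizer A B X U Xf Q R P eps Bx Bu Bf N"

definition truncated :: "(nat \<Rightarrow> real^'m) \<Rightarrow> nat \<Rightarrow> real^'m" where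
  "truncated u k = (if k < N then u k else 0)"

lemma pred_truncated: "k \<le> N \<Longrightarrow> pred x (truncated u) k = pred x u k"
  by (rule pred_state_cong) (auto simp: truncated_def)

lemma admissible_truncated: "admissible x (truncated u) \<longleftrightarrow> admissible x u"
  by (simp add: strictly_feasible_def pred_truncated truncated_def)

lemma cost_truncated: "cost x (truncated u) = cost x u"
  unfolding cost_eq by (auto intro!: sum.cong simp: pred_truncated truncated_def)

lemma tendsto_cost:
  assumes l: "admissible x l" and s: "\<And>k. (\<lambda>j. s j k) \<longlonglongrightarrow> l k"
  shows "(\<lambda>j. cost x (s j)) \<longlonglongrightarrow> cost x l"
proof -
  have pred_lim: "(\<lambda>j. pred x (s j) k) \<longlonglongrightarrow> pred x l k" for k
    by (rule tendsto_pred_state[OF s])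
  have "(\<lambda>j. stage_cost (pred x (s j) k) (s j k)) \<longlonglongrightarrow> stage_cost (pred x l k) (l k)"
    if "k < N" for k
    using l that unfolding stage_cost_def strictly_feasible_def
    by (intro tendsto_intros pred_lim s continuous_on_interior_tendsto[OF bx.continuous]
        continuous_on_interior_tendsto[OF bu.continuous]) auto
  moreover have "(\<lambda>j. terminal_cost (pred x (s j) N)) \<longlonglongrightarrow> terminal_cost (pred x l N)"
    using l unfolding strictly_feasible_def
    by (intro continuous_on_interior_tendsto[OF continuous_on_terminal_cost] pred_lim) auto
  ultimately show ?thesis
    unfolding cost_eq by (intro tendsto_add tendsto_sum) auto
qed

text \<open>The cost bounds the barrier terms, and the barriers blow up at the boundary.\<close>
lemma admissible_limit:
  assumes adm: "\<And>j. admissible x (s j)" and bound: "\<And>j. cost x (s j) \<le> c"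
    and s: "\<And>k. (\<lambda>j. s j k) \<longlonglongrightarrow> l k"
  shows "admissible x l"
proof -
  have pred_lim: "(\<lambda>j. pred x (s j) k) \<longlonglongrightarrow> pred x l k" for k
    by (rule tendsto_pred_state[OF s])
  have scaled: "b \<le> c / eps" if "eps * b \<le> c" for b
    using that eps_pos by (simp add: pos_le_divide_eq mult.commute)
  have "l k \<in> interior U \<and> pred x l k \<in> interior X" if "k < N" for k
  proof -
    have interior: "pred x (s j) k \<in> interior X" "s j k \<in> interior U" for j
      using adm[of j] that by (auto simp: strictly_feasible_def)
    have "eps * Bu (s j k) \<le> c \<and> eps * Bx (pred x (s j) k) \<le> c" for j
      using stage_cost_ge(1,2)[OF interior[of j]] stage_cost_le_cost[OF adm that, of j] bound[of j]
      by linarith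
    then have "\<forall>j. Bu (s j k) \<le> c / eps" "\<forall>j. Bx (pred x (s j) k) \<le> c / eps"
      using scaled by auto
    then show ?thesis
      using bu.bounded_limit_in_interior[OF _ s] bx.bounded_limit_in_interior[OF _ pred_lim] interior
      by blast
  qed
  moreover have "pred x l N \<in> interior Xf"
  proof (rule recentered_barrier_bounded_limit[OF terminal_barrier compact_imp_closed[OF Xf_compact]])
    have "eps * Bf (pred x (s j) N) \<le> c" for j
      using terminal_barrier_le_cost[OF adm, of j] bound[of j] by linarith
    then show "\<forall>j. Bf (pred x (s j) N) \<le> c / eps"
      using scaled by blast
    show "\<forall>j. pred x (s j) N \<in> interior Xf"
      using adm by (simp add: strictly_feasible_def)
  qed (rule pred_lim)
  ultimately show ?thesis
    by (simp add: strictly_feasible_def)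
qed

lemma closed_admissible_sublevel:
  assumes "closed T"
  shows "closed {u \<in> T. admissible x u \<and> cost x u \<le> c}"
  unfolding closed_sequential_limits
proof (intro allI impI, elim conjE)
  fix s l assume s: "\<forall>n. s n \<in> {u \<in> T. admissible x u \<and> cost x u \<le> c}" and lim: "s \<longlonglongrightarrow> l"
  have pointwise: "(\<lambda>j. s j k) \<longlonglongrightarrow> l k" for k
    using tendsto_apply[OF lim] .
  have "l \<in> T"
    using closed_sequentially[OF assms] s lim by blast
  moreover have "admissible x l"
    using s by (intro admissible_limit[OF _ _ pointwise]) auto
  moreover have "cost x l \<le> c"
    using s by (intro LIMSEQ_le_const2[OF tendsto_cost[OF \<open>admissible x l\<close> pointwise]]) auto
  ultimately show "l \<in> {u \<in> T. admissible x u \<and> cost x u \<le> c}"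
    by blast
qed

text \<open>Minimizers exist because, after truncating inputs beyond the horizon, the sublevel set of an
  admissible input is a closed subset of the compact product of input sets, on which the cost is
  continuous.\<close>
lemma minimizer_exists:
  assumes u0: "admissible x u0"
  shows "\<exists>u. minimizer x u"
proof -
  define T where "T = Pi\<^sub>E UNIV (\<lambda>k. if k < N then U else {0})"
  define L where "L = {u \<in> T. admissible x u \<and> cost x u \<le> cost x u0}"
  have "compactin (product_topology (\<lambda>_. euclidean) UNIV) T"
    using bu.compact_polytope by (simp add: T_def compactin_PiE)
  then have "compact T"
    by (simp add: T_def euclidean_product_topology)
  have "compact (L \<inter> T)"
    unfolding L_def
    by (rule closed_Int_compact[OF closed_admissible_sublevel[OF compact_imp_closed] \<open>compact T\<close>])
      (rule \<open>compact T\<close>)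
  moreover have "L \<subseteq> T"
    by (auto simp: L_def)
  ultimately have "compact L"
    by (simp add: Int_absorb2)
  moreover have "continuous_on L (cost x)"
  proof (rule continuous_on_sequentiallyI)
    fix s l assume "l \<in> L" and lim: "s \<longlonglongrightarrow> l"
    then have "admissible x l"
      by (simp add: L_def)
    then show "(\<lambda>n. cost x (s n)) \<longlonglongrightarrow> cost x l"
      by (rule tendsto_cost) (rule tendsto_apply[OF lim])
  qed
  moreover have truncated_in_L: "truncated v \<in> L" if "admissible x v" "cost x v \<le> cost x u0" for v
  proof -
    have "v k \<in> U" if "k < N" for k
      using \<open>admissible x v\<close> that interior_subset unfolding strictly_feasible_def by blast
    then have "truncated v \<in> T"
      by (auto simp: T_def truncated_def)
    then show ?thesis
      using that by (simp add: L_def admissible_truncated cost_truncated)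
  qed
  ultimately obtain us where us: "us \<in> L" "\<forall>v\<in>L. cost x us \<le> cost x v"
    using continuous_attains_inf[of L "cost x"] u0 by blast
  have "cost x us \<le> cost x v" if "admissible x v" for v
  proof (cases "cost x v \<le> cost x u0")
    case True
    then have "cost x us \<le> cost x (truncated v)"
      using us(2) truncated_in_L[OF that True] by blast
    then show ?thesis
      by (simp add: cost_truncated)
  next
    case False
    then show ?thesis
      using us(1) by (simp add: L_def)
  qed
  then show ?thesis
    using us(1) by (auto simp: is_barrier_minimizer_def L_def)
qed

lemma optimal_step:
  assumes opt: "\<forall>x\<in>interior XN. minimizer x (uopt x)" and x: "x \<in> interior XN"
  defines "x' \<equiv> A *v x + B *v uopt x 0"
  shows "x' \<in> interior XN" "cost x' (uopt x') + eps * Bx x \<le> cost x (uopt x)"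
proof -
  have adm: "admissible x (uopt x)"
    using opt x by (simp add: is_barrier_minimizer_def)
  have shifted: "admissible x' (shifted_input x (uopt x))"
    using admissible_shifted_input[OF adm] by (simp add: x'_def)
  then show "x' \<in> interior XN"
    by (rule admissible_imp_interior_XN)
  then have "cost x' (uopt x') \<le> cost x' (shifted_input x (uopt x))"
    using opt shifted by (simp add: is_barrier_minimizer_def)
  moreover have "eps * Bx x \<le> stage_cost x (uopt x 0)"
    using admissible_initial[OF adm] stage_cost_ge(1) by blast
  ultimately show "cost x' (uopt x') + eps * Bx x \<le> cost x (uopt x)"
    using cost_shifted_input[OF adm] by (simp add: x'_def)
qed

lemma small_cost_near_0:
  assumes "0 < m"
  shows "\<exists>\<delta>>0. \<forall>x. norm x < \<delta> \<longrightarrow> (\<exists>u. admissible x u \<and> cost x u < m)"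
proof -
  obtain \<delta>1 where \<delta>1: "0 < \<delta>1" "\<forall>x. dist x 0 < \<delta>1 \<longrightarrow> dist (terminal_cost x) 0 < m"
    using continuous_on_terminal_cost zero_in_interior_Xf assms
    unfolding continuous_on_eq_continuous_at[OF open_interior] continuous_at_eps_delta
    by (force simp: terminal_cost_0)
  obtain \<delta>2 where \<delta>2: "0 < \<delta>2" "ball 0 \<delta>2 \<subseteq> interior Xf"
    using zero_in_interior_Xf open_contains_ball open_interior by blast
  have "\<exists>u. admissible x u \<and> cost x u < m" if "norm x < min \<delta>1 \<delta>2" for x
    using terminal_candidate[of x] \<delta>1 \<delta>2 that by fastforce
  then show ?thesis
    using \<delta>1(1) \<delta>2(1) by (intro exI[of _ "min \<delta>1 \<delta>2"]) auto
qed

lemma closed_loop: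
  assumes opt: "\<forall>x\<in>interior XN. minimizer x (uopt x)"
  defines "f \<equiv> \<lambda>x. A *v x + B *v uopt x 0"
  shows "(\<forall>x0\<in>interior XN. \<forall>k. (f ^^ k) x0 \<in> interior XN \<and> (f ^^ k) x0 \<in> interior X \<and>
           uopt ((f ^^ k) x0) 0 \<in> interior U) \<and> asymptotically_stable_on f (interior XN)"
proof -
  have adm: "admissible x (uopt x)" if "x \<in> interior XN" for x
    using opt that by (simp add: is_barrier_minimizer_def)
  have first: "x \<in> interior X \<and> uopt x 0 \<in> interior U" if "x \<in> interior XN" for x
    using admissible_initial[OF adm[OF that]] .
  have step: "f x \<in> interior XN" "cost (f x) (uopt (f x)) + eps * Bx x \<le> cost x (uopt x)"
    if "x \<in> interior XN" for x
    using optimal_step[OF opt that] by (simp_all add: f_def)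
  have traj: "(f ^^ k) x0 \<in> interior XN" if "x0 \<in> interior XN" for x0 k
    using funpow_in_invariant[OF step(1) that] .
  have "asymptotically_stable_on f (interior XN)"
  proof (rule lyapunov_asymptotically_stable[where V = "\<lambda>x. cost x (uopt x)" and W = "\<lambda>x. eps * Bx x"])
    show "x \<in> interior XN \<Longrightarrow> eps * Bx x \<le> cost x (uopt x)" for x
      using first stage_cost_ge(1) stage_cost_le_cost[OF adm, of x 0] N_ge1 by fastforce
    show "\<exists>m>0. \<forall>x\<in>interior XN. e \<le> norm x \<longrightarrow> m \<le> eps * Bx x" if e: "0 < e" for e
    proof -
      obtain m where "0 < m" "\<forall>z\<in>interior X. e \<le> norm z \<longrightarrow> m \<le> Bx z"
        using bx.uniformly_positive[OF e] by blast
      then show ?thesis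
        using first eps_pos by (intro exI[of _ "eps * m"]) auto
    qed
    show "\<exists>\<delta>>0. \<forall>x\<in>interior XN. norm x < \<delta> \<longrightarrow> cost x (uopt x) < m" if "0 < m" for m
      using small_cost_near_0[OF that] opt admissible_imp_interior_XN
      by (fastforce simp: is_barrier_minimizer_def)
  qed (use zero_in_interior_XN step first eps_pos bx.nonneg in auto)
  then show ?thesis
    using traj first by blast
qed

end

theorem theorem1:
  fixes A :: "real^'n::finite^'n" and B :: "real^'m::finite^'n"
    and Cx :: "real^'n^'qx::finite" and dx :: "real^'qx"
    and Cu :: "real^'m^'qu::finite" and du :: "real^'qu"
    and Q :: "real^'n^'n" and R :: "real^'m^'m" and N :: nat and eps :: real
    and K :: "real^'n^'m" and M :: "real^'n^'n" and P :: "real^'n^'n"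
    and Nset :: "(real^'n) set" and Xf :: "(real^'n) set"
    and Bx :: "real^'n \<Rightarrow> real" and Bu :: "real^'m \<Rightarrow> real" and Bf :: "real^'n \<Rightarrow> real"
  defines "X \<equiv> polytope_set Cx dx"
      and "U \<equiv> polytope_set Cu du"
      and "AK \<equiv> A + B ** K"
      and "XK \<equiv> {x \<in> polytope_set Cx dx. K *v x \<in> polytope_set Cu du}"
      and "XN \<equiv> feasible_set A B (polytope_set Cx dx) (polytope_set Cu du) Xf N"
  assumes stab: "stabilizable A B"
    and X_compact: "compact X" and U_compact: "compact U"
    and dx_pos: "\<forall>i. 0 < dx $ i" and du_pos: "\<forall>i. 0 < du $ i"
    and Q_psd: "psd_mat Q" and R_pd: "pd_mat R"
    and N_ge1: "N \<ge> 1" and eps_pos: "eps > 0"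
    and K_stab: "schur_stable AK"
    \<comment> \<open>(A1)\<close>
    and A1x: "recentered_log_barrier Cx dx Bx"
    and A1u: "recentered_log_barrier Cu du Bu"
    \<comment> \<open>(A2)\<close>
    and A2_M: "psd_mat M"
    and A2_N: "convex Nset" "compact Nset" "0 \<in> interior Nset" "Nset \<subseteq> XK"
    and A2_bound: "\<forall>x\<in>Nset. x \<in> interior X \<and> K *v x \<in> interior U \<and>
                        Bx x + Bu (K *v x) \<le> x \<bullet> (M *v x)"
    \<comment> \<open>(A3)\<close>
    and A3: "pd_mat P" "P = transpose AK ** P ** AK + transpose K ** R ** K + Q + eps *\<^sub>R M"
    \<comment> \<open>(A4)\<close>
    and A4: "convex Xf" "compact Xf" "0 \<in> Xf" "Xf \<subseteq> Nset" "\<forall>x\<in>Xf. AK *v x \<in> Xf"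
    \<comment> \<open>(A5)\<close>
    and A5: "recentered_barrier Xf Bf"
            "\<forall>x\<in>interior Xf. AK *v x \<in> interior Xf \<and> Bf (AK *v x) - Bf x \<le> 0"
    and XN_int: "interior XN \<noteq> {}"
  shows "(\<forall>x\<in>interior XN. \<exists>u. is_barrier_minimizer A B X U Xf Q R P eps Bx Bu Bf N x u) \<and>
         (\<forall>uopt. (\<forall>x\<in>interior XN. is_barrier_minimizer A B X U Xf Q R P eps Bx Bu Bf N x (uopt x))
           \<longrightarrow> (let f = (\<lambda>x. A *v x + B *v uopt x 0) in
                 (\<forall>x0\<in>interior XN. \<forall>k.
                     (f ^^ k) x0 \<in> interior XN \<and> (f ^^ k) x0 \<in> interior X \<and>
                     uopt ((f ^^ k) x0) 0 \<in> interior U) \<and>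
                 asymptotically_stable_on f (interior XN)))"
proof -
  interpret barrier_mpc A B Cx dx Cu du Q R N eps K M P Nset Xf Bx Bu Bf
    using assms unfolding X_def U_def AK_def by (intro barrier_mpc.intro log_barrier.intro) auto
  show ?thesis
    unfolding XN_def X_def U_def Let_def
    using admissible_exists minimizer_exists closed_loop by blast
qed

end
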